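(* Let $P=P(G,[\omega])$ be a toric poset over $G=(V,E)$ and $I\subseteq V$. The following are equivalent: (i) $I$ is a toric filter of $P$; (ii) $I$ is an order ideal of $P(G,\omega')$ for some $\omega'\in[\omega]$; (iii) $I$ is an order filter of $P(G,\omega'')$ for some $\omega''\in[\omega]$; (iv) in at least one total toric extension of $P$, the elements of $I$ appear in consecutive cyclic order.
   Context: Toric poset setup: $V=[n]$; $\mathrm{Acyc}(G)$ acyclic orientations; $P(G,\omega)$ the poset given by the transitive closure of $\omega$; $[\omega]$ the class under the equivalence generated by converting a source into a sink; toric chambers (components of $\mathbb{R}^V/\mathbb{Z}^V$ minus the hyperplanes $\{x_i\equiv x_j\bmod1\}$, $\{i,j\}\in E$) correspond bijectively to classes $[\omega]$; $P(G,[\omega])$ is identified with its chamber $c(P)$. For a partition $\pi$, $D^{\mathrm{tor}}_\pi$ is the image in the torus of $\{x\in\mathbb{R}^V: x_i=x_j$ for $i,j$ in a common block$\}$. Toric filter: $I\subseteq V$ is a toric filter of $P$ if $I=\emptyset$, $I=V$, or $\emptyset\ne I\ne V$ and $\overline{c(P)}\cap D^{\mathrm{tor}}_{\{I,V\setminus I\}}$ is two-dimensional (equivalently, the partition $\{I,V\setminus I\}$ is closed w.r.t. $P$, i.e. it is the coarsest partition giving that intersection; this is the preimage structure of a toric morphism onto a two-element toric poset). An order ideal of a poset is a down-closed subset; an order filter an up-closed subset. A total toric extension of $P$ is a chamber $c(P')\subseteq c(P)$ of the toric arrangement of the complete graph $K_V$; these are indexed by cyclic classes $[(w_1,\dots,w_n)]$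 of permutations of $V$ (the set where $0\le x_{w_1}<\dots<x_{w_n}<1$ up to cyclic shift). *)

theory Defs
  imports "HOL-Analysis.Analysis"
begin

text \<open>Vertex set V = UNIV of a finite type 'a (V = [n] up to renaming, n = CARD('a)). Points of R^V are vectors real^'a;
  subsets of the torus R^V/Z^V are represented by their (Z^V-invariant) preimages in R^V.\<close>

definition simple_graph :: "'a set set \<Rightarrow> bool" where
  "simple_graph E \<longleftrightarrow> (\<forall>e\<in>E. card e = 2)"

text \<open>An orientation: (i,j) \<in> \<omega> means the edge {i,j} is directed i \<rightarrow> j, i.e. i < j in P(G,\<omega>).\<close>
definition orientation :: "'a set set \<Rightarrow> ('a \<times> 'a) set \<Rightarrow> bool" where
  "orientation E \<omega> \<longleftrightarrow> \<omega> \<subseteq> {(i,j). {i,j} \<in> E} \<and>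
     (\<forall>i j. {i,j} \<in> E \<longrightarrow> ((i,j) \<in> \<omega> \<longleftrightarrow> (j,i) \<notin> \<omega>))"

definition Acyc :: "'a set set \<Rightarrow> ('a \<times> 'a) set set" where
  "Acyc E = {\<omega>. orientation E \<omega> \<and> acyclic \<omega>}"

definition is_source :: "('a \<times> 'a) set \<Rightarrow> 'a \<Rightarrow> bool" where
  "is_source \<omega> i \<longleftrightarrow> (\<forall>j. (j,i) \<notin> \<omega>)"

definition flip_at :: "('a \<times> 'a) set \<Rightarrow> 'a \<Rightarrow> ('a \<times> 'a) set" where
  "flip_at \<omega> i = {(a,b) \<in> \<omega>. a \<noteq> i \<and> b \<noteq> i} \<union> {(b,a) | a b. (a,b) \<in> \<omega> \<and> (a = i \<or> b = i)}"

definition flip_rel :: "'a set set \<Rightarrow> (('a \<times> 'a) set \<times> ('a \<times> 'a) set) set" where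
  "flip_rel E = {(\<omega>, flip_at \<omega> i) | \<omega> i. \<omega> \<in> Acyc E \<and> is_source \<omega> i}"

definition toric_class :: "'a set set \<Rightarrow> ('a \<times> 'a) set \<Rightarrow> ('a \<times> 'a) set set" where
  "toric_class E \<omega> = {\<omega>'. (\<omega>, \<omega>') \<in> (flip_rel E \<union> (flip_rel E)\<inverse>)\<^sup>*}"

definition order_ideal :: "('a \<times> 'a) set \<Rightarrow> 'a set \<Rightarrow> bool" where
  "order_ideal \<omega> I \<longleftrightarrow> (\<forall>a b. (a,b) \<in> \<omega>\<^sup>+ \<longrightarrow> b \<in> I \<longrightarrow> a \<in> I)"

definition order_filter :: "('a \<times> 'a) set \<Rightarrow> 'a set \<Rightarrow> bool" where
  "order_filter \<omega> I \<longleftrightarrow> (\<forall>a b. (a,b) \<in> \<omega>\<^sup>+ \<longrightarrow> a \<in> I \<longrightarrow> b \<in> I)"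

text \<open>Toric arrangement of G: hyperplanes x_i \<equiv> x_j mod 1. For a point off the arrangement,
  its orientation is read off from the representative in [0,1)^V (fractional parts).\<close>
definition off_arrangement :: "'a set set \<Rightarrow> real^'a \<Rightarrow> bool" where
  "off_arrangement E x \<longleftrightarrow> (\<forall>i j. {i,j} \<in> E \<longrightarrow> frac (x$i) \<noteq> frac (x$j))"

definition orient_of :: "'a set set \<Rightarrow> real^'a \<Rightarrow> ('a \<times> 'a) set" where
  "orient_of E x = {(i,j). {i,j} \<in> E \<and> frac (x$i) < frac (x$j)}"

definition toric_chamber :: "'a set set \<Rightarrow> ('a \<times> 'a) set \<Rightarrow> (real^'a) set" where
  "toric_chamber E \<omega> = {x. off_arrangement E x \<and> orient_of E x \<in> toric_class E \<omega>}"

definition D_tor :: "'a set set \<Rightarrow> (real^'a) set" where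
  "D_tor \<pi> = {x. \<forall>B\<in>\<pi>. \<forall>i\<in>B. \<forall>j\<in>B. x$i - x$j \<in> \<int>}"

text \<open>Toric filter. Since D^tor_{I,V-I} is (locally) a 2-dimensional flat, the intersection
  with the closed chamber is two-dimensional iff it contains a nonempty relatively open piece of it.\<close>
definition toric_filter :: "('a::finite) set set \<Rightarrow> ('a \<times> 'a) set \<Rightarrow> 'a set \<Rightarrow> bool" where
  "toric_filter E \<omega> I \<longleftrightarrow> I = {} \<or> I = UNIV \<or>
     (I \<noteq> {} \<and> I \<noteq> UNIV \<and>
      (\<exists>U. open U \<and> U \<inter> D_tor {I, -I} \<noteq> {} \<and>
           U \<inter> D_tor {I, -I} \<subseteq> closure (toric_chamber E \<omega>)))"

definition complete_graph :: "'a set set" where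
  "complete_graph = {{i,j} | i j. i \<noteq> j}"

definition lin_orient :: "'a list \<Rightarrow> ('a \<times> 'a) set" where
  "lin_orient w = {(w!a, w!b) | a b. a < b \<and> b < length w}"

definition cyclically_consecutive :: "'a list \<Rightarrow> 'a set \<Rightarrow> bool" where
  "cyclically_consecutive w I \<longleftrightarrow> (\<exists>k. set (take (card I) (rotate k w)) = I)"

definition total_toric_extension :: "('a::finite) set set \<Rightarrow> ('a \<times> 'a) set \<Rightarrow> 'a list \<Rightarrow> bool" where
  "total_toric_extension E \<omega> w \<longleftrightarrow> distinct w \<and> set w = UNIV \<and>
     toric_chamber complete_graph (lin_orient w) \<subseteq> toric_chamber E \<omega>"

end

theory Submission
  imports Defs
begin

text \<open>
  Flipping a source into a sink moves a minimal element to the top. Flipping the elements of an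
  order ideal \<open>I\<close> one at a time, in a linear order, therefore reverses exactly the edges between
  \<open>I\<close> and its complement, which turns \<open>I\<close> into an order filter: (ii) and (iii) are equivalent.
  A linear extension listing \<open>I\<close> first is a total toric extension in which \<open>I\<close> is consecutive;
  conversely, rotating a total order so that \<open>I\<close> comes first is a sequence of flips, and restricting
  the rotated order to \<open>G\<close> makes \<open>I\<close> an ideal: (ii) and (iv) are equivalent.

  Geometrically, if \<open>I\<close> is an ideal of \<open>\<omega>'\<close>, a point of \<open>D\<^sup>t\<^sup>o\<^sup>r\<close> with value near \<open>1/4\<close> on \<open>I\<close> and
  near \<open>3/4\<close> off \<open>I\<close> becomes a point of \<open>c(\<omega>')\<close> after adding a small multiple of a height
  function of \<open>\<omega>'\<close>. Conversely, a generic point of \<open>D\<^sup>t\<^sup>o\<^sup>r\<close> in the closed chamber has two distinct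
  nonzero fractional parts \<open>\<alpha>\<close> on \<open>I\<close> and \<open>\<beta>\<close> off \<open>I\<close>; every nearby chamber point orients all edges
  between \<open>I\<close> and its complement from the smaller of \<open>\<alpha>, \<beta>\<close> to the larger, so \<open>I\<close> is an ideal or
  a filter of the orientation of that chamber point.
\<close>

lemma order_filter_iff_order_ideal_Compl: "order_filter r I \<longleftrightarrow> order_ideal r (- I)"
  unfolding order_filter_def order_ideal_def by blast

lemma order_ideal_iff_edges: "order_ideal r I \<longleftrightarrow> (\<forall>a b. (a, b) \<in> r \<longrightarrow> b \<in> I \<longrightarrow> a \<in> I)"
proof
  show "order_ideal r I \<Longrightarrow> \<forall>a b. (a, b) \<in> r \<longrightarrow> b \<in> I \<longrightarrow> a \<in> I"
    unfolding order_ideal_def by blast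
next
  assume edges: "\<forall>a b. (a, b) \<in> r \<longrightarrow> b \<in> I \<longrightarrow> a \<in> I"
  show "order_ideal r I"
    unfolding order_ideal_def
  proof (intro allI impI)
    fix a b assume "(a, b) \<in> r\<^sup>+" "b \<in> I"
    then show "a \<in> I"
      by (induction rule: converse_trancl_induct) (use edges in blast)+
  qed
qed

lemma acyclic_asym: "acyclic r \<Longrightarrow> asym r"
  unfolding acyclic_def by (meson asymI r_into_trancl trancl_trans)

section \<open>Source-to-sink flips and toric classes\<close>

lemma flip_at_iff:
  "(a, b) \<in> flip_at r m \<longleftrightarrow> (if a = m \<or> b = m then (b, a) \<in> r else (a, b) \<in> r)"
  unfolding flip_at_def by auto

lemma orientation_flip_at:
  assumes "orientation E r"
  shows "orientation E (flip_at r m)"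
proof -
  have edge: "{a, b} \<in> E" if "(a, b) \<in> r" for a b
    using assms that unfolding orientation_def by blast
  have one_way: "(a, b) \<in> r \<longleftrightarrow> (b, a) \<notin> r" if "{a, b} \<in> E" for a b
    using assms that unfolding orientation_def by blast
  show ?thesis
    unfolding orientation_def
  proof (intro conjI allI impI subsetI)
    fix p assume p: "p \<in> flip_at r m"
    obtain a b where "p = (a, b)" by (cases p)
    with p have "(a, b) \<in> r \<or> (b, a) \<in> r" by (auto simp: flip_at_iff split: if_splits)
    then have "{a, b} \<in> E" using edge insert_commute by metis
    then show "p \<in> {(i, j). {i, j} \<in> E}" using \<open>p = (a, b)\<close> by simp
  next
    fix i j assume ij: "{i, j} \<in> E"
    then have "{j, i} \<in> E" by (simp add: insert_commute)
    then show "(i, j) \<in> flip_at r m \<longleftrightarrow> (j, i) \<notin> flip_at r m"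
      using one_way[OF ij] one_way[of j i] by (auto simp: flip_at_iff)
  qed
qed

lemma flip_at_in_Acyc:
  assumes "r \<in> Acyc E" and source: "is_source r m"
  shows "flip_at r m \<in> Acyc E"
proof -
  have "acyclic r" using assms(1) by (simp add: Acyc_def)
  have no_out: "(m, b) \<notin> flip_at r m" for b
    using source by (simp add: flip_at_iff is_source_def)
  have path: "(x, y) \<in> r\<^sup>+ \<or> y = m" if "(x, y) \<in> (flip_at r m)\<^sup>+" for x y
    using that
  proof (induction rule: trancl_induct)
    case (base y)
    then show ?case using no_out by (auto simp: flip_at_iff split: if_splits)
  next
    case (step y z)
    then have "y \<noteq> m" using no_out by blast
    then show ?case using step by (auto simp: flip_at_iff split: if_splits intro: trancl_into_trancl)
  qed
  have "acyclic (flip_at r m)"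
  proof (rule acyclicI, intro allI notI)
    fix x assume cycle: "(x, x) \<in> (flip_at r m)\<^sup>+"
    have "x \<noteq> m"
      using cycle no_out by (auto elim: converse_tranclE)
    then show False using path[OF cycle] \<open>acyclic r\<close> by (simp add: acyclic_def)
  qed
  with assms(1) show ?thesis by (simp add: Acyc_def orientation_flip_at)
qed

lemma toric_class_refl: "r \<in> toric_class E r"
  by (simp add: toric_class_def)

lemma toric_class_trans:
  "r' \<in> toric_class E r \<Longrightarrow> r'' \<in> toric_class E r' \<Longrightarrow> r'' \<in> toric_class E r"
  unfolding toric_class_def by (auto intro: rtrancl_trans)

lemma toric_class_flip: "(r, r') \<in> flip_rel E \<Longrightarrow> r' \<in> toric_class E r"
  unfolding toric_class_def by blast

lemma toric_class_Acyc:
  assumes "r \<in> Acyc E" "r' \<in> toric_class E r"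
  shows "r' \<in> Acyc E"
proof -
  have "(r, r') \<in> (flip_rel E \<union> (flip_rel E)\<inverse>)\<^sup>*"
    using assms(2) by (simp add: toric_class_def)
  then show ?thesis
    by (induction rule: rtrancl_induct) (use assms(1) flip_at_in_Acyc in \<open>auto simp: flip_rel_def\<close>)
qed

lemma toric_chamber_mono: "r' \<in> toric_class E r \<Longrightarrow> toric_chamber E r' \<subseteq> toric_chamber E r"
  unfolding toric_chamber_def using toric_class_trans by blast

section \<open>Reversing the edges across an order ideal\<close>

definition reverse_across :: "('a \<times> 'a) set \<Rightarrow> 'a set \<Rightarrow> ('a \<times> 'a) set" where
  "reverse_across r J =
     {(a, b) \<in> r. a \<in> J \<longleftrightarrow> b \<in> J} \<union> {(b, a) | a b. (a, b) \<in> r \<and> (a \<in> J \<longleftrightarrow> b \<notin> J)}"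

lemma reverse_across_iff:
  "(a, b) \<in> reverse_across r J \<longleftrightarrow> (if a \<in> J \<longleftrightarrow> b \<in> J then (a, b) \<in> r else (b, a) \<in> r)"
  unfolding reverse_across_def by auto

lemma reverse_across_flip_at:
  assumes "acyclic r" "m \<in> J"
  shows "reverse_across (flip_at r m) (J - {m}) = reverse_across r J"
proof (rule set_eqI)
  fix p :: "'a \<times> 'a"
  obtain a b where p: "p = (a, b)" by (cases p)
  have "(a, b) \<notin> r \<or> (b, a) \<notin> r" "(m, m) \<notin> r"
    using acyclic_asym[OF assms(1)] assms(1) by (auto dest: asymD simp: acyclic_def)
  then show "p \<in> reverse_across (flip_at r m) (J - {m}) \<longleftrightarrow> p \<in> reverse_across r J"
    unfolding p reverse_across_iff flip_at_iff using assms(2) by auto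
qed

lemma order_ideal_flip_at:
  assumes "is_source r m" "order_ideal r J"
  shows "order_ideal (flip_at r m) (J - {m})"
  unfolding order_ideal_iff_edges
proof (intro allI impI)
  fix a b assume ab: "(a, b) \<in> flip_at r m" "b \<in> J - {m}"
  have "a \<noteq> m" using ab assms(1) unfolding is_source_def by (auto simp: flip_at_iff)
  with ab have "(a, b) \<in> r" by (simp add: flip_at_iff)
  then show "a \<in> J - {m}"
    using assms(2) ab(2) \<open>a \<noteq> m\<close> unfolding order_ideal_iff_edges by blast
qed

lemma reverse_across_in_toric_class:
  fixes r :: "('a::finite \<times> 'a) set"
  assumes "r \<in> Acyc E" "order_ideal r J"
  shows "reverse_across r J \<in> toric_class E r"
  using assms
proof (induction "card J" arbitrary: r J)
  case 0
  then have "reverse_across r J = r" by (simp add: reverse_across_def)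
  then show ?case by (simp add: toric_class_refl)
next
  case (Suc n)
  have "acyclic r" using Suc.prems(1) by (simp add: Acyc_def)
  then have "wf r" by (simp add: finite_acyclic_wf)
  from Suc.hyps(2) obtain j where "j \<in> J" by fastforce
  then obtain m where m: "m \<in> J" and minimal: "\<And>a. (a, m) \<in> r \<Longrightarrow> a \<notin> J"
    using wfE_min[OF \<open>wf r\<close>] by metis
  have source: "is_source r m"
    using Suc.prems(2) m minimal unfolding is_source_def order_ideal_iff_edges by blast
  have "flip_at r m \<in> toric_class E r"
    using Suc.prems(1) source by (intro toric_class_flip) (auto simp: flip_rel_def)
  moreover have "reverse_across (flip_at r m) (J - {m}) \<in> toric_class E (flip_at r m)"
    using Suc.hyps(1)[of "J - {m}"] Suc.hyps(2) m flip_at_in_Acyc[OF Suc.prems(1) source]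
      order_ideal_flip_at[OF source Suc.prems(2)] by simp
  ultimately show ?case
    using reverse_across_flip_at[OF \<open>acyclic r\<close> m] toric_class_trans by metis
qed

lemma ex_order_filter_if_order_ideal:
  fixes r :: "('a::finite \<times> 'a) set"
  assumes "r \<in> Acyc E" "order_ideal r I"
  shows "\<exists>r'\<in>toric_class E r. order_filter r' I"
proof -
  have "order_filter (reverse_across r I) I"
    using assms(2) unfolding order_filter_iff_order_ideal_Compl order_ideal_iff_edges
    by (auto simp: reverse_across_iff)
  then show ?thesis using reverse_across_in_toric_class[OF assms] by blast
qed

lemma ex_order_ideal_iff_ex_order_filter:
  fixes \<omega> :: "('a::finite \<times> 'a) set"
  assumes "\<omega> \<in> Acyc E"
  shows "(\<exists>\<omega>'\<in>toric_class E \<omega>. order_ideal \<omega>' I) \<longleftrightarrow> (\<exists>\<omega>''\<in>toric_class E \<omega>. order_filter \<omega>'' I)"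
proof -
  have swap: "\<exists>\<omega>''\<in>toric_class E \<omega>. order_filter \<omega>'' J"
    if "\<omega>' \<in> toric_class E \<omega>" "order_ideal \<omega>' J" for \<omega>' J
    using ex_order_filter_if_order_ideal[OF toric_class_Acyc[OF assms that(1)] that(2)]
      toric_class_trans[OF that(1)] by blast
  show ?thesis
    using swap[of _ I] swap[of _ "- I"] by (auto simp: order_filter_iff_order_ideal_Compl)
qed

section \<open>Total orders given by lists\<close>

text \<open>The position of \<open>x\<close> in \<open>l\<close>; unspecified unless \<open>l\<close> is distinct and contains \<open>x\<close>.\<close>

definition pos :: "'a list \<Rightarrow> 'a \<Rightarrow> nat" where
  "pos l x = (THE a. a < length l \<and> l ! a = x)"

lemma pos_nth: "distinct l \<Longrightarrow> a < length l \<Longrightarrow> pos l (l ! a) = a"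
  unfolding pos_def by (rule the_equality) (auto simp: nth_eq_iff_index_eq)

lemma pos_less_length: "distinct l \<Longrightarrow> x \<in> set l \<Longrightarrow> pos l x < length l"
  by (metis in_set_conv_nth pos_nth)

lemma nth_pos: "distinct l \<Longrightarrow> x \<in> set l \<Longrightarrow> l ! pos l x = x"
  by (metis in_set_conv_nth pos_nth)

lemma set_take_eq_pos_less:
  assumes "distinct l"
  shows "set (take c l) = {x \<in> set l. pos l x < c}"
proof (rule set_eqI, rule iffI)
  fix x assume "x \<in> set (take c l)"
  then obtain a where "a < c" "a < length l" "x = l ! a" by (auto simp: in_set_conv_nth)
  then show "x \<in> {x \<in> set l. pos l x < c}" using pos_nth[OF assms] by auto
next
  fix x assume x: "x \<in> {x \<in> set l. pos l x < c}"
  then have "take c l ! pos l x = x" using nth_pos[OF assms] by simp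
  moreover have "pos l x < length (take c l)" using x pos_less_length[OF assms] by simp
  ultimately show "x \<in> set (take c l)" by (metis nth_mem)
qed

lemma lin_orient_iff:
  assumes "distinct l"
  shows "(x, y) \<in> lin_orient l \<longleftrightarrow> x \<in> set l \<and> y \<in> set l \<and> pos l x < pos l y"
proof
  assume "(x, y) \<in> lin_orient l"
  then obtain a b where "x = l ! a" "y = l ! b" "a < b" "b < length l"
    unfolding lin_orient_def by blast
  then show "x \<in> set l \<and> y \<in> set l \<and> pos l x < pos l y" using pos_nth[OF assms] by auto
next
  assume "x \<in> set l \<and> y \<in> set l \<and> pos l x < pos l y"
  then have "(x, y) = (l ! pos l x, l ! pos l y) \<and> pos l x < pos l y \<and> pos l y < length l"
    using nth_pos[OF assms] pos_less_length[OF assms] by auto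
  then show "(x, y) \<in> lin_orient l" unfolding lin_orient_def by blast
qed

lemma lin_orient_Nil: "lin_orient [] = {}"
  unfolding lin_orient_def by auto

lemma lin_orient_Cons: "lin_orient (x # xs) = {x} \<times> set xs \<union> lin_orient xs"
proof (rule set_eqI, rule iffI)
  fix p assume "p \<in> lin_orient (x # xs)"
  then obtain a b where p: "p = ((x # xs) ! a, (x # xs) ! b)" "a < b" "b < Suc (length xs)"
    unfolding lin_orient_def by auto
  then obtain b' where b: "b = Suc b'" by (cases b) auto
  show "p \<in> {x} \<times> set xs \<union> lin_orient xs"
  proof (cases a)
    case 0
    then show ?thesis using p b by auto
  next
    case (Suc a')
    then have "(xs ! a', xs ! b') \<in> lin_orient xs" using p b unfolding lin_orient_def by auto
    then show ?thesis using p b Suc by auto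
  qed
next
  fix p assume "p \<in> {x} \<times> set xs \<union> lin_orient xs"
  then consider y where "p = (x, y)" "y \<in> set xs" | a b where "p = (xs ! a, xs ! b)" "a < b" "b < length xs"
    unfolding lin_orient_def by blast
  then show "p \<in> lin_orient (x # xs)"
  proof cases
    case 1
    then obtain b where "b < length xs" "p = ((x # xs) ! 0, (x # xs) ! Suc b)"
      by (auto simp: in_set_conv_nth)
    then have "p = ((x # xs) ! 0, (x # xs) ! Suc b) \<and> 0 < Suc b \<and> Suc b < length (x # xs)"
      by simp
    then show ?thesis unfolding lin_orient_def by blast
  next
    case 2
    then have "p = ((x # xs) ! Suc a, (x # xs) ! Suc b) \<and> Suc a < Suc b \<and> Suc b < length (x # xs)"
      by simp
    then show ?thesis unfolding lin_orient_def by blast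
  qed
qed

lemma lin_orient_append: "lin_orient (xs @ ys) = lin_orient xs \<union> lin_orient ys \<union> set xs \<times> set ys"
  by (induction xs) (auto simp: lin_orient_Cons lin_orient_Nil)

lemma lin_orient_subset: "lin_orient l \<subseteq> set l \<times> set l"
  unfolding lin_orient_def by auto

lemma lin_orient_acyclic: "distinct l \<Longrightarrow> acyclic (lin_orient l)"
proof -
  assume "distinct l"
  then have "lin_orient l \<subseteq> inv_image less_than (pos l)"
    by (auto simp: lin_orient_iff)
  then show ?thesis using wf_subset wf_acyclic by blast
qed

lemma complete_graph_iff: "{i, j} \<in> complete_graph \<longleftrightarrow> i \<noteq> j"
  unfolding complete_graph_def by (auto simp: doubleton_eq_iff)

lemma lin_orient_in_Acyc_complete_graph:
  assumes "distinct l" "set l = UNIV"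
  shows "lin_orient l \<in> Acyc complete_graph"
proof -
  have "orientation complete_graph (lin_orient l)"
    unfolding orientation_def
  proof (intro conjI allI impI subsetI)
    fix p assume p: "p \<in> lin_orient l"
    obtain a b where "p = (a, b)" by (cases p)
    with p have "a \<noteq> b" by (auto simp: lin_orient_iff[OF assms(1)])
    with \<open>p = (a, b)\<close> show "p \<in> {(i, j). {i, j} \<in> complete_graph}"
      by (simp add: complete_graph_iff)
  next
    fix i j :: 'a assume "{i, j} \<in> complete_graph"
    then have "i \<noteq> j" by (simp add: complete_graph_iff)
    moreover have "l ! pos l i = i" "l ! pos l j = j" using nth_pos[OF assms(1)] assms(2) by auto
    ultimately have "pos l i \<noteq> pos l j" by metis
    then show "(i, j) \<in> lin_orient l \<longleftrightarrow> (j, i) \<notin> lin_orient l"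
      using assms(2) by (auto simp: lin_orient_iff[OF assms(1)])
  qed
  then show ?thesis using lin_orient_acyclic[OF assms(1)] by (simp add: Acyc_def)
qed

lemma linear_extension_exists:
  assumes "finite S" "acyclic r"
  shows "\<exists>l. distinct l \<and> set l = S \<and> r \<inter> S \<times> S \<subseteq> lin_orient l"
  using assms(1)
proof (induction "card S" arbitrary: S)
  case 0
  then show ?case by (intro exI[of _ "[]"]) (simp add: lin_orient_Nil)
next
  case (Suc n)
  have "wf (r \<inter> S \<times> S)"
    using Suc.prems assms(2) by (intro finite_acyclic_wf) (auto intro: acyclic_subset)
  from Suc.hyps(2) obtain s where "s \<in> S" by fastforce
  then obtain m where m: "m \<in> S" and minimal: "\<And>a. (a, m) \<in> r \<inter> S \<times> S \<Longrightarrow> a \<notin> S"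
    using wfE_min[OF \<open>wf (r \<inter> S \<times> S)\<close>] by metis
  have "card (S - {m}) = n" using Suc.hyps(2) Suc.prems m by simp
  then obtain l where l: "distinct l" "set l = S - {m}" "r \<inter> (S - {m}) \<times> (S - {m}) \<subseteq> lin_orient l"
    using Suc.hyps(1)[of "S - {m}"] Suc.prems by blast
  have "r \<inter> S \<times> S \<subseteq> lin_orient (m # l)"
  proof
    fix p assume p: "p \<in> r \<inter> S \<times> S"
    obtain a b where ab: "p = (a, b)" by (cases p)
    have "b \<noteq> m" using minimal p ab by blast
    show "p \<in> lin_orient (m # l)"
    proof (cases "a = m")
      case True
      then show ?thesis using ab p \<open>b \<noteq> m\<close> l(2) by (simp add: lin_orient_Cons)
    next
      case False
      then have "p \<in> lin_orient l" using l(3) p ab \<open>b \<noteq> m\<close> by blast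
      then show ?thesis by (simp add: lin_orient_Cons)
    qed
  qed
  then show ?case using l m by (intro exI[of _ "m # l"]) auto
qed

lemma lin_orient_rotate1_flip:
  assumes "distinct v" "set v = UNIV"
  shows "(lin_orient v, lin_orient (rotate1 v)) \<in> flip_rel complete_graph"
proof -
  obtain h t where v: "v = h # t" using assms(2) by (cases v) auto
  have "h \<notin> set t" using assms(1) v by auto
  have first: "lin_orient v = {h} \<times> set t \<union> lin_orient t"
    using v by (simp add: lin_orient_Cons)
  have last: "lin_orient (rotate1 v) = lin_orient t \<union> set t \<times> {h}"
    using v by (simp add: lin_orient_append lin_orient_Cons lin_orient_Nil)
  have source: "is_source (lin_orient v) h"
    unfolding is_source_def first using lin_orient_subset[of t] \<open>h \<notin> set t\<close> by auto
  have "flip_at (lin_orient v) h = lin_orient (rotate1 v)"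
  proof (rule set_eqI)
    fix p :: "'a \<times> 'a"
    obtain a b where p: "p = (a, b)" by (cases p)
    show "p \<in> flip_at (lin_orient v) h \<longleftrightarrow> p \<in> lin_orient (rotate1 v)"
      unfolding p flip_at_iff first last using lin_orient_subset[of t] \<open>h \<notin> set t\<close> by auto
  qed
  then show ?thesis
    using source lin_orient_in_Acyc_complete_graph[OF assms] unfolding flip_rel_def by blast
qed

lemma lin_orient_rotate_in_toric_class:
  assumes "distinct v" "set v = UNIV"
  shows "lin_orient (rotate k v) \<in> toric_class complete_graph (lin_orient v)"
proof (induction k)
  case 0
  then show ?case by (simp add: toric_class_refl)
next
  case (Suc k)
  have "(lin_orient (rotate k v), lin_orient (rotate (Suc k) v)) \<in> flip_rel complete_graph"
    unfolding rotate_Suc using assms by (intro lin_orient_rotate1_flip) auto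
  then show ?case using Suc.IH toric_class_flip toric_class_trans by metis
qed

section \<open>Restricting orientations of the complete graph\<close>

definition restrict_to :: "'a set set \<Rightarrow> ('a \<times> 'a) set \<Rightarrow> ('a \<times> 'a) set" where
  "restrict_to E t = {(i, j) \<in> t. {i, j} \<in> E}"

lemma simple_graph_edge_in_complete_graph:
  "simple_graph E \<Longrightarrow> {i, j} \<in> E \<Longrightarrow> {i, j} \<in> complete_graph"
  unfolding simple_graph_def complete_graph_iff by fastforce

lemma restrict_to_in_Acyc:
  assumes E: "simple_graph E" and t: "t \<in> Acyc complete_graph"
  shows "restrict_to E t \<in> Acyc E"
proof -
  have one_way: "(i, j) \<in> t \<longleftrightarrow> (j, i) \<notin> t" if "{i, j} \<in> complete_graph" for i j
    using t that unfolding Acyc_def orientation_def by blast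
  have "orientation E (restrict_to E t)"
    unfolding orientation_def
  proof (intro conjI allI impI subsetI)
    fix p assume "p \<in> restrict_to E t"
    then show "p \<in> {(i, j). {i, j} \<in> E}" unfolding restrict_to_def by auto
  next
    fix i j assume ij: "{i, j} \<in> E"
    then have "{j, i} \<in> E" by (simp add: insert_commute)
    then show "(i, j) \<in> restrict_to E t \<longleftrightarrow> (j, i) \<notin> restrict_to E t"
      using ij one_way[OF simple_graph_edge_in_complete_graph[OF E ij]]
      unfolding restrict_to_def by blast
  qed
  moreover have "acyclic (restrict_to E t)"
    using t acyclic_subset[of t "restrict_to E t"] by (auto simp: Acyc_def restrict_to_def)
  ultimately show ?thesis by (simp add: Acyc_def)
qed

lemma restrict_to_flip_at: "restrict_to E (flip_at t m) = flip_at (restrict_to E t) m"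
proof (rule set_eqI)
  fix p :: "'a \<times> 'a"
  obtain a b where p: "p = (a, b)" by (cases p)
  have "{a, b} = {b, a}" by blast
  then show "p \<in> restrict_to E (flip_at t m) \<longleftrightarrow> p \<in> flip_at (restrict_to E t) m"
    unfolding p restrict_to_def flip_at_iff by auto
qed

lemma restrict_to_flip_rel:
  assumes "simple_graph E" "(t, t') \<in> flip_rel complete_graph"
  shows "(restrict_to E t, restrict_to E t') \<in> flip_rel E"
proof -
  obtain m where t': "t' = flip_at t m" and t: "t \<in> Acyc complete_graph" "is_source t m"
    using assms(2) unfolding flip_rel_def by blast
  have "restrict_to E t \<in> Acyc E" by (rule restrict_to_in_Acyc[OF assms(1) t(1)])
  moreover have "is_source (restrict_to E t) m"
    using t(2) unfolding is_source_def restrict_to_def by auto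
  moreover have "restrict_to E t' = flip_at (restrict_to E t) m"
    unfolding t' by (rule restrict_to_flip_at)
  ultimately show ?thesis unfolding flip_rel_def by blast
qed

lemma restrict_to_toric_class:
  assumes "simple_graph E" "t' \<in> toric_class complete_graph t"
  shows "restrict_to E t' \<in> toric_class E (restrict_to E t)"
proof -
  have "(t, t') \<in> (flip_rel complete_graph \<union> (flip_rel complete_graph)\<inverse>)\<^sup>*"
    using assms(2) by (simp add: toric_class_def)
  then have "(restrict_to E t, restrict_to E t') \<in> (flip_rel E \<union> (flip_rel E)\<inverse>)\<^sup>*"
  proof (induction rule: rtrancl_induct)
    case (step y z)
    then have "(restrict_to E y, restrict_to E z) \<in> flip_rel E \<union> (flip_rel E)\<inverse>"
      using restrict_to_flip_rel[OF assms(1)] by blast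
    then show ?case using step.IH by (rule rtrancl_into_rtrancl[rotated])
  qed simp
  then show ?thesis by (simp add: toric_class_def)
qed

lemma toric_chamber_complete_graph_subset:
  assumes "simple_graph E"
  shows "toric_chamber complete_graph t \<subseteq> toric_chamber E (restrict_to E t)"
proof
  fix x assume "x \<in> toric_chamber complete_graph t"
  then have off: "off_arrangement complete_graph x"
    and in_class: "orient_of complete_graph x \<in> toric_class complete_graph t"
    by (auto simp: toric_chamber_def)
  have "orient_of E x = restrict_to E (orient_of complete_graph x)"
    using simple_graph_edge_in_complete_graph[OF assms] by (auto simp: orient_of_def restrict_to_def)
  moreover have "off_arrangement E x"
    using off simple_graph_edge_in_complete_graph[OF assms] unfolding off_arrangement_def by blast
  ultimately show "x \<in> toric_chamber E (restrict_to E t)"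
    using restrict_to_toric_class[OF assms in_class] by (simp add: toric_chamber_def)
qed

lemma restrict_to_eq_if_subset:
  assumes "orientation E r" "r \<subseteq> t" "asym t"
  shows "restrict_to E t = r"
proof (rule set_eqI)
  fix p :: "'a \<times> 'a"
  obtain a b where p: "p = (a, b)" by (cases p)
  have "(a, b) \<in> r \<Longrightarrow> {a, b} \<in> E" "{a, b} \<in> E \<Longrightarrow> (a, b) \<in> r \<longleftrightarrow> (b, a) \<notin> r"
    using assms(1) unfolding orientation_def by blast+
  then show "p \<in> restrict_to E t \<longleftrightarrow> p \<in> r"
    unfolding p restrict_to_def using assms(2) asymD[OF assms(3), of a b] by blast
qed

lemma toric_chamber_memI:
  assumes "orientation E r"
    and "\<And>i. 0 \<le> x $ i \<and> x $ i < 1" and increasing: "\<And>i j. (i, j) \<in> r \<Longrightarrow> x $ i < x $ j"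
  shows "x \<in> toric_chamber E r"
proof -
  have frac: "frac (x $ i) = x $ i" for i
    using assms(2) by (simp add: frac_eq)
  have edge: "(a, b) \<in> r \<Longrightarrow> {a, b} \<in> E" and one_way: "{a, b} \<in> E \<Longrightarrow> (a, b) \<in> r \<or> (b, a) \<in> r"
    for a b using assms(1) unfolding orientation_def by blast+
  have "orient_of E x = r"
  proof (rule set_eqI)
    fix p :: "'a \<times> 'a"
    obtain a b where p: "p = (a, b)" by (cases p)
    show "p \<in> orient_of E x \<longleftrightarrow> p \<in> r"
      unfolding p orient_of_def frac
      using edge[of a b] one_way[of a b] increasing[of a b] increasing[of b a] by auto
  qed
  moreover have "off_arrangement E x"
    unfolding off_arrangement_def frac using one_way increasing by (metis less_irrefl)
  ultimately show ?thesis by (simp add: toric_chamber_def toric_class_refl)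
qed

definition list_point :: "'a::finite list \<Rightarrow> real^'a" where
  "list_point l = (\<chi> i. real (pos l i) / real (length l))"

lemma list_point_bounds:
  assumes "distinct l" "set l = UNIV"
  shows "0 \<le> list_point l $ i \<and> list_point l $ i < 1"
proof -
  have "pos l i < length l" using pos_less_length[OF assms(1)] assms(2) by simp
  then show ?thesis by (simp add: list_point_def divide_less_eq)
qed

lemma list_point_less_iff:
  assumes "set l = UNIV"
  shows "list_point l $ i < list_point l $ j \<longleftrightarrow> pos l i < pos l j"
proof -
  have "0 < real (length l)" using assms by (cases l) auto
  then show ?thesis by (simp add: list_point_def divide_less_cancel)
qed

lemma list_point_in_toric_chamber:
  assumes "distinct l" "set l = UNIV"
  shows "list_point l \<in> toric_chamber complete_graph (lin_orient l)"
  using lin_orient_in_Acyc_complete_graph[OF assms] list_point_bounds[OF assms]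
  by (intro toric_chamber_memI) (auto simp: Acyc_def lin_orient_iff[OF assms(1)] list_point_less_iff[OF assms(2)])

section \<open>Total toric extensions\<close>

lemma total_toric_extension_if_order_ideal:
  fixes \<omega> :: "('a::finite \<times> 'a) set"
  assumes E: "simple_graph E" and \<omega>: "\<omega> \<in> Acyc E" and I: "order_ideal \<omega> I"
  shows "\<exists>w. total_toric_extension E \<omega> w \<and> cyclically_consecutive w I"
proof -
  have "acyclic \<omega>" using \<omega> by (simp add: Acyc_def)
  obtain l1 where l1: "distinct l1" "set l1 = I" "\<omega> \<inter> I \<times> I \<subseteq> lin_orient l1"
    using linear_extension_exists[OF finite \<open>acyclic \<omega>\<close>] by blast
  obtain l2 where l2: "distinct l2" "set l2 = - I" "\<omega> \<inter> (- I) \<times> (- I) \<subseteq> lin_orient l2"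
    using linear_extension_exists[OF finite \<open>acyclic \<omega>\<close>] by blast
  let ?w = "l1 @ l2"
  have w: "distinct ?w" "set ?w = UNIV" using l1 l2 by auto
  have "\<omega> \<subseteq> lin_orient ?w"
  proof
    fix p assume p: "p \<in> \<omega>"
    obtain a b where ab: "p = (a, b)" by (cases p)
    have "b \<in> I \<longrightarrow> a \<in> I" using I p ab unfolding order_ideal_iff_edges by blast
    then show "p \<in> lin_orient ?w"
      using l1 l2 p ab by (auto simp: lin_orient_append)
  qed
  then have "restrict_to E (lin_orient ?w) = \<omega>"
    using \<omega> acyclic_asym[OF lin_orient_acyclic[OF w(1)]]
    by (intro restrict_to_eq_if_subset) (auto simp: Acyc_def)
  then have "toric_chamber complete_graph (lin_orient ?w) \<subseteq> toric_chamber E \<omega>"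
    using toric_chamber_complete_graph_subset[OF E] by metis
  moreover have "cyclically_consecutive ?w I"
    unfolding cyclically_consecutive_def
    using l1 distinct_card[OF l1(1)] by (intro exI[of _ 0]) simp
  ultimately show ?thesis using w unfolding total_toric_extension_def by blast
qed

lemma order_ideal_if_total_toric_extension:
  fixes \<omega> :: "('a::finite \<times> 'a) set"
  assumes "total_toric_extension E \<omega> w" "cyclically_consecutive w I"
  shows "\<exists>\<omega>'\<in>toric_class E \<omega>. order_ideal \<omega>' I"
proof -
  have w: "distinct w" "set w = UNIV"
    and sub: "toric_chamber complete_graph (lin_orient w) \<subseteq> toric_chamber E \<omega>"
    using assms(1) unfolding total_toric_extension_def by auto
  obtain k where k: "set (take (card I) (rotate k w)) = I"
    using assms(2) unfolding cyclically_consecutive_def by blast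
  define v where "v = rotate k w"
  have v: "distinct v" "set v = UNIV" using w by (simp_all add: v_def)
  have "list_point v \<in> toric_chamber complete_graph (lin_orient v)"
    by (rule list_point_in_toric_chamber[OF v])
  also have "\<dots> \<subseteq> toric_chamber complete_graph (lin_orient w)"
    unfolding v_def by (rule toric_chamber_mono[OF lin_orient_rotate_in_toric_class[OF w]])
  also have "\<dots> \<subseteq> toric_chamber E \<omega>" by (rule sub)
  finally have "orient_of E (list_point v) \<in> toric_class E \<omega>"
    by (simp add: toric_chamber_def)
  moreover have "order_ideal (orient_of E (list_point v)) I"
  proof -
    have I_iff: "i \<in> I \<longleftrightarrow> pos v i < card I" for i
      using k set_take_eq_pos_less[OF v(1)] v(2) unfolding v_def by auto
    have "frac (list_point v $ i) = list_point v $ i" for i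
      using list_point_bounds[OF v] by (simp add: frac_eq)
    then have "pos v a < pos v b" if "(a, b) \<in> orient_of E (list_point v)" for a b
      using that list_point_less_iff[OF v(2)] by (simp add: orient_of_def)
    then show ?thesis
      unfolding order_ideal_iff_edges I_iff by (blast intro: less_trans)
  qed
  ultimately show ?thesis by blast
qed

lemma ex_order_ideal_iff_total_toric_extension:
  fixes \<omega> :: "('a::finite \<times> 'a) set"
  assumes "simple_graph E" "\<omega> \<in> Acyc E"
  shows "(\<exists>\<omega>'\<in>toric_class E \<omega>. order_ideal \<omega>' I) \<longleftrightarrow>
         (\<exists>w. total_toric_extension E \<omega> w \<and> cyclically_consecutive w I)"
proof
  assume "\<exists>\<omega>'\<in>toric_class E \<omega>. order_ideal \<omega>' I"
  then obtain \<omega>' where \<omega>': "\<omega>' \<in> toric_class E \<omega>" "order_ideal \<omega>' I" by blast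
  then show "\<exists>w. total_toric_extension E \<omega> w \<and> cyclically_consecutive w I"
    using total_toric_extension_if_order_ideal[OF assms(1) toric_class_Acyc[OF assms(2) \<omega>'(1)]]
      toric_chamber_mono[OF \<omega>'(1)] unfolding total_toric_extension_def by blast
qed (use order_ideal_if_total_toric_extension in blast)

section \<open>The sets \<open>D\<^sup>t\<^sup>o\<^sup>r\<close> and toric filters\<close>

lemma D_tor_pair_iff:
  "x \<in> D_tor {I, - I} \<longleftrightarrow> (\<forall>i j. (i \<in> I \<longleftrightarrow> j \<in> I) \<longrightarrow> x $ i - x $ j \<in> \<int>)"
  unfolding D_tor_def by auto

lemma in_closure_if_ray:
  fixes y v :: "'b::real_normed_vector"
  assumes "0 < \<delta>" and "\<And>\<epsilon>. 0 < \<epsilon> \<Longrightarrow> \<epsilon> < \<delta> \<Longrightarrow> y + \<epsilon> *\<^sub>R v \<in> S"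
  shows "y \<in> closure S"
proof (rule Lim_in_closed_set)
  show "\<forall>\<^sub>F \<epsilon> in at_right 0. y + \<epsilon> *\<^sub>R v \<in> closure S"
    unfolding eventually_at_right_field using assms closure_subset by blast
  have "((\<lambda>\<epsilon>. y + \<epsilon> *\<^sub>R v) \<longlongrightarrow> y + 0 *\<^sub>R v) (at_right 0)"
    by (intro tendsto_intros)
  then show "((\<lambda>\<epsilon>. y + \<epsilon> *\<^sub>R v) \<longlongrightarrow> y) (at_right 0)" by simp
qed simp_all

lemma D_tor_near_quarter_point:
  fixes y :: "real^'a"
  assumes "y \<in> ball (\<chi> i. if i \<in> I then 1/4 else 3/4) (1/8)" "y \<in> D_tor {I, - I}"
  shows "i \<in> I \<Longrightarrow> y $ i \<in> {1/8<..<3/8}" and "i \<notin> I \<Longrightarrow> y $ i \<in> {5/8<..<7/8}"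
    and "(i \<in> I \<longleftrightarrow> j \<in> I) \<Longrightarrow> y $ i = y $ j"
proof -
  let ?p = "\<chi> i. (if i \<in> I then 1/4 else 3/4 :: real)"
  have close: "\<bar>y $ k - ?p $ k\<bar> < 1/8" for k
    using component_le_norm_cart[of "?p - y" k] assms(1) by (simp add: dist_norm abs_minus_commute)
  have low: "y $ k \<in> {1/8<..<3/8}" if "k \<in> I" for k
  proof -
    have "\<bar>y $ k - 1/4\<bar> < 1/8" using close[of k] that by simp
    then show ?thesis unfolding abs_less_iff greaterThanLessThan_iff by linarith
  qed
  have high: "y $ k \<in> {5/8<..<7/8}" if "k \<notin> I" for k
  proof -
    have "\<bar>y $ k - 3/4\<bar> < 1/8" using close[of k] that by simp
    then show ?thesis unfolding abs_less_iff greaterThanLessThan_iff by linarith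
  qed
  show "i \<in> I \<Longrightarrow> y $ i \<in> {1/8<..<3/8}" "i \<notin> I \<Longrightarrow> y $ i \<in> {5/8<..<7/8}"
    by (fact low high)+
  assume same_side: "i \<in> I \<longleftrightarrow> j \<in> I"
  then have "y $ i - y $ j \<in> \<int>" using assms(2) by (simp add: D_tor_pair_iff)
  moreover have "\<bar>y $ i - y $ j\<bar> < 1"
    using low[of i] low[of j] high[of i] high[of j] same_side by (cases "i \<in> I") auto
  ultimately show "y $ i = y $ j" using Ints_nonzero_abs_less1 by fastforce
qed

lemma D_tor_near_quarter_point_shift_in_toric_chamber:
  fixes \<omega> :: "('a::finite \<times> 'a) set"
  assumes \<omega>: "\<omega> \<in> Acyc E" and I: "order_ideal \<omega> I"
    and y: "y \<in> ball (\<chi> i. if i \<in> I then 1/4 else 3/4) (1/8) \<inter> D_tor {I, - I}"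
    and h: "\<And>i. 0 \<le> h $ i \<and> h $ i < 1" and up: "\<And>i j. (i, j) \<in> \<omega> \<Longrightarrow> h $ i < h $ j"
    and \<epsilon>: "0 < \<epsilon>" "\<epsilon> < 1/8"
  shows "y + \<epsilon> *\<^sub>R h \<in> toric_chamber E \<omega>"
proof (rule toric_chamber_memI)
  note near = D_tor_near_quarter_point[OF IntD1[OF y] IntD2[OF y]]
  have small: "0 \<le> \<epsilon> * h $ i \<and> \<epsilon> * h $ i < 1/8" for i
  proof -
    have "\<epsilon> * h $ i \<le> \<epsilon>" using h[of i] \<epsilon>(1) by (simp add: mult_left_le)
    moreover have "0 \<le> \<epsilon> * h $ i" using h[of i] \<epsilon>(1) by simp
    ultimately show ?thesis using \<epsilon>(2) by linarith
  qed
  show "orientation E \<omega>" using \<omega> by (simp add: Acyc_def)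
  show "0 \<le> (y + \<epsilon> *\<^sub>R h) $ i \<and> (y + \<epsilon> *\<^sub>R h) $ i < 1" for i
    using near(1,2)[of i] small[of i] by (cases "i \<in> I") auto
  show "(y + \<epsilon> *\<^sub>R h) $ i < (y + \<epsilon> *\<^sub>R h) $ j" if ij: "(i, j) \<in> \<omega>" for i j
  proof (cases "i \<in> I \<longleftrightarrow> j \<in> I")
    case True
    then show ?thesis using near(3)[OF True] up[OF ij] \<epsilon>(1) by simp
  next
    case False
    moreover have "j \<in> I \<longrightarrow> i \<in> I" using I ij unfolding order_ideal_iff_edges by blast
    ultimately have "i \<in> I" "j \<notin> I" by blast+
    then show ?thesis using near(1)[of i] near(2)[of j] small[of i] small[of j] by simp
  qed
qed

text \<open>A linear extension of \<open>\<omega>\<close> serves as the height function pushing points of \<open>D\<^sup>t\<^sup>o\<^sup>r\<close> into the chamber.\<close>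

lemma D_tor_near_quarter_point_subset_closure:
  fixes \<omega> :: "('a::finite \<times> 'a) set"
  assumes \<omega>: "\<omega> \<in> Acyc E" and I: "order_ideal \<omega> I"
  shows "ball (\<chi> i. if i \<in> I then 1/4 else 3/4) (1/8) \<inter> D_tor {I, - I} \<subseteq> closure (toric_chamber E \<omega>)"
proof
  fix y assume y: "y \<in> ball (\<chi> i. if i \<in> I then 1/4 else 3/4) (1/8) \<inter> D_tor {I, - I}"
  have "acyclic \<omega>" using \<omega> by (simp add: Acyc_def)
  obtain l where l: "distinct l" "set l = UNIV" "\<omega> \<subseteq> lin_orient l"
    using linear_extension_exists[OF finite \<open>acyclic \<omega>\<close>, of UNIV] by auto
  have up: "list_point l $ i < list_point l $ j" if "(i, j) \<in> \<omega>" for i j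
    using l that by (auto simp: lin_orient_iff list_point_less_iff)
  show "y \<in> closure (toric_chamber E \<omega>)"
    using D_tor_near_quarter_point_shift_in_toric_chamber[OF \<omega> I y list_point_bounds[OF l(1,2)] up]
    by (intro in_closure_if_ray[of "1/8"]) auto
qed

lemma exists_shift_not_in_Ints:
  fixes u v d :: real
  assumes "0 < d" "2 * d < 1"
  shows "\<exists>t \<in> {d, 2 * d, 3 * d}. u + t \<notin> \<int> \<and> v + t \<notin> \<int>"
proof (rule ccontr)
  have one_hit: "t = t'"
    if "w + t \<in> \<int>" "w + t' \<in> \<int>" "t \<in> {d, 2 * d, 3 * d}" "t' \<in> {d, 2 * d, 3 * d}" for w t t'
  proof -
    have "(w + t) - (w + t') \<in> \<int>" using that(1,2) by (rule Ints_diff)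
    moreover have "\<bar>(w + t) - (w + t')\<bar> < 1" using that(3,4) assms by auto
    ultimately show ?thesis using Ints_nonzero_abs_less1 by fastforce
  qed
  assume "\<not> (\<exists>t \<in> {d, 2 * d, 3 * d}. u + t \<notin> \<int> \<and> v + t \<notin> \<int>)"
  then have "u + d \<in> \<int> \<or> v + d \<in> \<int>" "u + 2 * d \<in> \<int> \<or> v + 2 * d \<in> \<int>"
    "u + 3 * d \<in> \<int> \<or> v + 3 * d \<in> \<int>" by auto
  moreover have "d \<noteq> 2 * d" "d \<noteq> 3 * d" "2 * d \<noteq> 3 * d" using assms(1) by auto
  ultimately show False using one_hit[of u] one_hit[of v] by blast
qed

lemma D_tor_generic_point:
  fixes y\<^sub>0 :: "real^'a::finite"
  assumes "open U" "y\<^sub>0 \<in> U \<inter> D_tor {I, - I}" "i\<^sub>0 \<in> I" "j\<^sub>0 \<notin> I"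
  obtains y where "y \<in> U \<inter> D_tor {I, - I}" "y $ i\<^sub>0 \<notin> \<int>" "y $ j\<^sub>0 \<notin> \<int>" "y $ j\<^sub>0 - y $ i\<^sub>0 \<notin> \<int>"
proof -
  obtain \<delta> where \<delta>: "0 < \<delta>" "ball y\<^sub>0 \<delta> \<subseteq> U" using assms(1,2) open_contains_ball by blast
  define N where "N = real CARD('a)"
  define d where "d = min (1/4) (\<delta> / (4 * N))"
  have N: "1 \<le> N" unfolding N_def by simp
  have d: "0 < d" "2 * d < 1" "N * (3 * d) < \<delta>"
  proof -
    show "0 < d" "2 * d < 1" using \<delta>(1) N by (auto simp: d_def)
    have "d \<le> \<delta> / (4 * N)" by (simp add: d_def)
    then have "N * (3 * d) \<le> N * (3 * (\<delta> / (4 * N)))" using N by (intro mult_left_mono) auto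
    also have "\<dots> < \<delta>" using N \<delta>(1) by simp
    finally show "N * (3 * d) < \<delta>" .
  qed
  obtain s where s: "s \<in> {d, 2 * d, 3 * d}" "y\<^sub>0 $ i\<^sub>0 + s \<notin> \<int>"
    using exists_shift_not_in_Ints[OF d(1,2), of "y\<^sub>0 $ i\<^sub>0" "y\<^sub>0 $ i\<^sub>0"] by blast
  obtain t where t: "t \<in> {d, 2 * d, 3 * d}" "y\<^sub>0 $ j\<^sub>0 + t \<notin> \<int>" "y\<^sub>0 $ j\<^sub>0 - (y\<^sub>0 $ i\<^sub>0 + s) + t \<notin> \<int>"
    using exists_shift_not_in_Ints[OF d(1,2)] by blast
  define q :: "real^'a" where "q = (\<chi> i. if i \<in> I then s else t)"
  have "norm q \<le> (\<Sum>i\<in>UNIV. \<bar>q $ i\<bar>)" by (rule norm_le_l1_cart)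
  also have "\<dots> \<le> N * (3 * d)"
    using s(1) t(1) d(1) sum_bounded_above[of UNIV "\<lambda>i. \<bar>q $ i\<bar>" "3 * d"]
    by (auto simp: q_def N_def)
  also have "\<dots> < \<delta>" by (fact d(3))
  finally have "y\<^sub>0 + q \<in> U" using \<delta>(2) by (auto simp: dist_norm)
  moreover have "y\<^sub>0 + q \<in> D_tor {I, - I}"
    using assms(2) by (auto simp: D_tor_pair_iff q_def)
  moreover have "(y\<^sub>0 + q) $ i\<^sub>0 = y\<^sub>0 $ i\<^sub>0 + s" "(y\<^sub>0 + q) $ j\<^sub>0 = y\<^sub>0 $ j\<^sub>0 + t"
    using assms(3,4) by (simp_all add: q_def)
  ultimately show ?thesis
    using that[of "y\<^sub>0 + q"] s(2) t(2,3) by (simp add: algebra_simps)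
qed

lemma frac_eq_iff_diff_Ints: "frac x = frac y \<longleftrightarrow> x - y \<in> \<int>"
  using frac_diff_eq[of x y] frac_diff_zero[of x y] by auto

lemma frac_close:
  fixes y z \<gamma> :: real
  assumes "\<gamma> < frac y" "frac y + \<gamma> < 1" "\<bar>z - y\<bar> < \<gamma>"
  shows "\<bar>frac z - frac y\<bar> < \<gamma>"
proof -
  have "\<lfloor>z\<rfloor> = \<lfloor>y\<rfloor>"
    using assms by (intro floor_unique) (auto simp: frac_def abs_less_iff)
  then show ?thesis using assms(3) by (simp add: frac_def)
qed

lemma order_ideal_orient_of_if_frac_separated:
  assumes "\<And>i j. i \<in> A \<Longrightarrow> j \<notin> A \<Longrightarrow> frac (x $ i) < frac (x $ j)"
  shows "order_ideal (orient_of E x) A"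
  unfolding order_ideal_iff_edges orient_of_def using assms by (force dest: less_asym)

lemma ex_near_orient_of_order_ideal_or_filter:
  fixes y :: "real^'a"
  assumes "y \<in> closure S" and frac_y: "\<And>i. frac (y $ i) = (if i \<in> I then \<alpha> else \<beta>)"
    and "\<alpha> \<noteq> \<beta>" "0 < \<alpha>" "\<alpha> < 1" "0 < \<beta>" "\<beta> < 1"
  shows "\<exists>z\<in>S. order_ideal (orient_of E z) I \<or> order_filter (orient_of E z) I"
proof -
  txt \<open>\<open>\<gamma>\<close> keeps the fractional parts away from the jump of \<open>frac\<close> at the integers and
    separates \<open>\<alpha>\<close> from \<open>\<beta>\<close>.\<close>
  define \<gamma> where "\<gamma> = min (min \<alpha> (1 - \<alpha>)) (min (min \<beta> (1 - \<beta>)) \<bar>\<alpha> - \<beta>\<bar>) / 2"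
  have "0 < 2 * \<gamma>" "2 * \<gamma> \<le> \<alpha>" "2 * \<gamma> \<le> 1 - \<alpha>" "2 * \<gamma> \<le> \<beta>" "2 * \<gamma> \<le> 1 - \<beta>"
    "2 * \<gamma> \<le> \<bar>\<alpha> - \<beta>\<bar>"
    using assms(3-7) unfolding \<gamma>_def by auto
  then have \<gamma>: "0 < \<gamma>" "\<gamma> < \<alpha>" "\<alpha> + \<gamma> < 1" "\<gamma> < \<beta>" "\<beta> + \<gamma> < 1" "2 * \<gamma> \<le> \<bar>\<alpha> - \<beta>\<bar>"
    by linarith+
  obtain z where z: "z \<in> S" "dist z y < \<gamma>"
    using assms(1) \<gamma>(1) unfolding closure_approachable by blast
  have frac_z: "\<bar>frac (z $ i) - (if i \<in> I then \<alpha> else \<beta>)\<bar> < \<gamma>" for i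
  proof -
    have "\<bar>z $ i - y $ i\<bar> < \<gamma>"
      using component_le_norm_cart[of "z - y" i] z(2) by (simp add: dist_norm)
    then show ?thesis
      using frac_close[of \<gamma> "y $ i" "z $ i"] frac_y[of i] \<gamma> by (cases "i \<in> I") auto
  qed
  have "order_ideal (orient_of E z) I \<or> order_filter (orient_of E z) I"
  proof (cases "\<alpha> < \<beta>")
    case True
    have "frac (z $ i) < frac (z $ j)" if "i \<in> I" "j \<notin> I" for i j
      using frac_z[of i] frac_z[of j] that \<gamma>(6) True by (auto simp: abs_less_iff)
    then show ?thesis using order_ideal_orient_of_if_frac_separated by blast
  next
    case False
    have "frac (z $ i) < frac (z $ j)" if "i \<in> - I" "j \<notin> - I" for i j
      using frac_z[of i] frac_z[of j] that \<gamma>(6) False assms(3) by (auto simp: abs_less_iff)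
    then show ?thesis
      using order_ideal_orient_of_if_frac_separated order_filter_iff_order_ideal_Compl by blast
  qed
  with z(1) show ?thesis by blast
qed

lemma order_ideal_if_toric_filter_condition:
  fixes \<omega> :: "('a::finite \<times> 'a) set"
  assumes \<omega>: "\<omega> \<in> Acyc E" and "I \<noteq> {}" "I \<noteq> UNIV" "open U"
    and "U \<inter> D_tor {I, - I} \<noteq> {}" and in_closure: "U \<inter> D_tor {I, - I} \<subseteq> closure (toric_chamber E \<omega>)"
  shows "\<exists>\<omega>'\<in>toric_class E \<omega>. order_ideal \<omega>' I"
proof -
  obtain i\<^sub>0 j\<^sub>0 where ij: "i\<^sub>0 \<in> I" "j\<^sub>0 \<notin> I" using assms(2,3) by blast
  obtain y where y: "y \<in> U \<inter> D_tor {I, - I}" "y $ i\<^sub>0 \<notin> \<int>" "y $ j\<^sub>0 \<notin> \<int>" "y $ j\<^sub>0 - y $ i\<^sub>0 \<notin> \<int>"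
    using D_tor_generic_point[OF assms(4) _ ij] assms(5) by blast
  have frac_y: "frac (y $ i) = (if i \<in> I then frac (y $ i\<^sub>0) else frac (y $ j\<^sub>0))" for i
    using y(1) ij by (auto simp: frac_eq_iff_diff_Ints D_tor_pair_iff)
  have "frac (y $ i\<^sub>0) \<noteq> frac (y $ j\<^sub>0)"
    using y(4) Ints_minus[of "y $ i\<^sub>0 - y $ j\<^sub>0"] unfolding frac_eq_iff_diff_Ints by auto
  moreover have "y \<in> closure (toric_chamber E \<omega>)" using in_closure y(1) by blast
  ultimately obtain z where "z \<in> toric_chamber E \<omega>"
    "order_ideal (orient_of E z) I \<or> order_filter (orient_of E z) I"
    using ex_near_orient_of_order_ideal_or_filter[OF _ frac_y] y(2,3) frac_lt_1 by force
  moreover have "orient_of E z \<in> toric_class E \<omega>"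
    using \<open>z \<in> toric_chamber E \<omega>\<close> by (simp add: toric_chamber_def)
  ultimately show ?thesis using ex_order_ideal_iff_ex_order_filter[OF \<omega>] by blast
qed

lemma toric_filter_iff_ex_order_ideal:
  fixes \<omega> :: "('a::finite \<times> 'a) set"
  assumes \<omega>: "\<omega> \<in> Acyc E"
  shows "toric_filter E \<omega> I \<longleftrightarrow> (\<exists>\<omega>'\<in>toric_class E \<omega>. order_ideal \<omega>' I)"
proof (cases "I = {} \<or> I = UNIV")
  case True
  then have "order_ideal \<omega> I" by (auto simp: order_ideal_def)
  then show ?thesis using True toric_class_refl unfolding toric_filter_def by blast
next
  case proper: False
  show ?thesis
  proof
    assume "toric_filter E \<omega> I"
    then show "\<exists>\<omega>'\<in>toric_class E \<omega>. order_ideal \<omega>' I"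
      using proper order_ideal_if_toric_filter_condition[OF \<omega>] unfolding toric_filter_def by blast
  next
    assume "\<exists>\<omega>'\<in>toric_class E \<omega>. order_ideal \<omega>' I"
    then obtain \<omega>' where \<omega>': "\<omega>' \<in> toric_class E \<omega>" "order_ideal \<omega>' I" by blast
    let ?U = "ball (\<chi> i. (if i \<in> I then 1/4 else 3/4 :: real)) (1/8)"
    have "(\<chi> i. (if i \<in> I then 1/4 else 3/4 :: real)) \<in> ?U \<inter> D_tor {I, - I}"
      by (simp add: D_tor_pair_iff)
    moreover have "?U \<inter> D_tor {I, - I} \<subseteq> closure (toric_chamber E \<omega>)"
      using D_tor_near_quarter_point_subset_closure[OF toric_class_Acyc[OF \<omega> \<omega>'(1)] \<omega>'(2)]
        closure_mono[OF toric_chamber_mono[OF \<omega>'(1)]] by blast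
    ultimately show "toric_filter E \<omega> I"
      using proper open_ball unfolding toric_filter_def by blast
  qed
qed

theorem mainTheorem12:
  fixes E :: "('a::finite) set set" and \<omega> :: "('a \<times> 'a) set" and I :: "'a set"
  assumes "simple_graph E" and "\<omega> \<in> Acyc E"
  shows "(toric_filter E \<omega> I \<longleftrightarrow> (\<exists>\<omega>'\<in>toric_class E \<omega>. order_ideal \<omega>' I)) \<and>
         (toric_filter E \<omega> I \<longleftrightarrow> (\<exists>\<omega>''\<in>toric_class E \<omega>. order_filter \<omega>'' I)) \<and>
         (toric_filter E \<omega> I \<longleftrightarrow>
            (\<exists>w. total_toric_extension E \<omega> w \<and> cyclically_consecutive w I))"
  using toric_filter_iff_ex_order_ideal[OF assms(2)] ex_order_ideal_iff_ex_order_filter[OF assms(2)]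
    ex_order_ideal_iff_total_toric_extension[OF assms]
  by blast

end
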